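(* Let $X$ be a finite connected poset and $F$ a field with $\mathrm{char}(F)\notin\{2,3\}$. Let $\varphi:I(X,F)\to I(X,F)$ be a bijective $F$-linear map with $\varphi(fgf)=\varphi(f)\varphi(g)\varphi(f)$ for all $f,g$. Then $\varphi=r\psi$, where $r\in\{-1,1\}$ and $\psi$ is either an automorphism or an anti-automorphism of $I(X,F)$.
   Context: $I(X,F)$ is the incidence algebra of the locally finite poset $X$ over $F$ (functions $f:X\times X\to F$ vanishing unless $x\le y$, with product $(fg)(x,y)=\sum_{x\le z\le y}f(x,z)g(z,y)$). A poset is connected if any two elements are joined by a finite sequence of elements in which consecutive elements are comparable. *)

theory Defs
  imports Main
begin

text \<open>The finite poset X is modelled as a finite type 'a with a partial order
(class order); every finite poset is isomorphic to such a type.\<close>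

definition poset_connected :: "('a::order) itself \<Rightarrow> bool" where
  "poset_connected _ \<longleftrightarrow>
     (\<forall>x y::'a. (\<lambda>a b. a \<le> b \<or> b \<le> a)\<^sup>*\<^sup>* x y)"

definition inc_alg :: "('a::order \<Rightarrow> 'a \<Rightarrow> 'b::field) set" where
  "inc_alg = {f. \<forall>x y. \<not> x \<le> y \<longrightarrow> f x y = 0}"

definition inc_mult :: "('a::order \<Rightarrow> 'a \<Rightarrow> 'b::field) \<Rightarrow> ('a \<Rightarrow> 'a \<Rightarrow> 'b) \<Rightarrow> 'a \<Rightarrow> 'a \<Rightarrow> 'b" where
  "inc_mult f g = (\<lambda>x y. \<Sum>z\<in>{z. x \<le> z \<and> z \<le> y}. f x z * g z y)"

definition inc_add :: "('a \<Rightarrow> 'a \<Rightarrow> 'b::field) \<Rightarrow> ('a \<Rightarrow> 'a \<Rightarrow> 'b) \<Rightarrow> 'a \<Rightarrow> 'a \<Rightarrow> 'b" where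
  "inc_add f g = (\<lambda>x y. f x y + g x y)"

definition inc_scale :: "'b::field \<Rightarrow> ('a \<Rightarrow> 'a \<Rightarrow> 'b) \<Rightarrow> 'a \<Rightarrow> 'a \<Rightarrow> 'b" where
  "inc_scale c f = (\<lambda>x y. c * f x y)"

definition inc_linear :: "(('a::order \<Rightarrow> 'a \<Rightarrow> 'b::field) \<Rightarrow> ('a \<Rightarrow> 'a \<Rightarrow> 'b)) \<Rightarrow> bool" where
  "inc_linear \<phi> \<longleftrightarrow>
     (\<forall>f\<in>inc_alg. \<forall>g\<in>inc_alg. \<phi> (inc_add f g) = inc_add (\<phi> f) (\<phi> g)) \<and>
     (\<forall>c. \<forall>f\<in>inc_alg. \<phi> (inc_scale c f) = inc_scale c (\<phi> f))"

definition inc_automorphism :: "(('a::order \<Rightarrow> 'a \<Rightarrow> 'b::field) \<Rightarrow> ('a \<Rightarrow> 'a \<Rightarrow> 'b)) \<Rightarrow> bool" where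
  "inc_automorphism \<psi> \<longleftrightarrow> bij_betw \<psi> inc_alg inc_alg \<and> inc_linear \<psi> \<and>
     (\<forall>f\<in>inc_alg. \<forall>g\<in>inc_alg. \<psi> (inc_mult f g) = inc_mult (\<psi> f) (\<psi> g))"

definition inc_anti_automorphism :: "(('a::order \<Rightarrow> 'a \<Rightarrow> 'b::field) \<Rightarrow> ('a \<Rightarrow> 'a \<Rightarrow> 'b)) \<Rightarrow> bool" where
  "inc_anti_automorphism \<psi> \<longleftrightarrow> bij_betw \<psi> inc_alg inc_alg \<and> inc_linear \<psi> \<and>
     (\<forall>f\<in>inc_alg. \<forall>g\<in>inc_alg. \<psi> (inc_mult f g) = inc_mult (\<psi> g) (\<psi> f))"

end

theory Submission
  imports Defs "HOL-Library.Function_Algebras"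
begin

text \<open>Since \<phi>(1) h \<phi>(1) = h for every h, the element \<phi>(1) is an involution commuting with
  all of I(X,F); on a connected poset it is therefore a scalar c = \<plusminus>1, and c \<phi> is a unital
  Jordan triple isomorphism \<psi>. Then \<psi> preserves squares, hence f g + g f, and the images E x
  of the diagonal matrix units are orthogonal idempotents with one-dimensional corners. For
  x < y the image of the matrix unit e(x,y) lies either in E x I E y or in E y I E x, and two
  such pairs sharing an endpoint make the same choice. By connectedness the choice is global,
  so \<psi> is multiplicative, respectively anti-multiplicative, on matrix units and hence
  everywhere.\<close>

text \<open>Since X is finite we work with the full matrix product; it agrees with inc_mult on I(X,F)
  and, unlike inc_mult, is associative without side conditions.\<close>

definition mmult :: "('a::finite \<Rightarrow> 'a \<Rightarrow> 'b::field) \<Rightarrow> ('a \<Rightarrow> 'a \<Rightarrow> 'b) \<Rightarrow> 'a \<Rightarrow> 'a \<Rightarrow> 'b"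
  (infixl "\<odot>" 70) where
  "f \<odot> g = (\<lambda>x y. \<Sum>z\<in>UNIV. f x z * g z y)"

definition id_mat :: "'a \<Rightarrow> 'a \<Rightarrow> 'b::field" where
  "id_mat = (\<lambda>x y. if x = y then 1 else 0)"

definition unit_mat :: "'a \<Rightarrow> 'a \<Rightarrow> 'a \<Rightarrow> 'a \<Rightarrow> 'b::field" where
  "unit_mat x y = (\<lambda>a b. if a = x \<and> b = y then 1 else 0)"

lemma sum_fun_apply: "sum F I a = (\<Sum>i\<in>I. F i a)"
  by (induct I rule: infinite_finite_induct) auto

lemma if_zero_mult [simp]:
  "(if P then (a::'b::field) else 0) * t = (if P then a * t else 0)"
  "t * (if P then (a::'b::field) else 0) = (if P then t * a else 0)"
  by auto

lemma mmult_assoc: "(f \<odot> g) \<odot> h = f \<odot> (g \<odot> h)"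
  unfolding mmult_def
  by (rule ext)+ (simp add: sum_distrib_left sum_distrib_right mult.assoc, rule sum.swap)

lemma mmult_add_left: "(f + g) \<odot> h = f \<odot> h + g \<odot> h"
  unfolding mmult_def by (rule ext)+ (simp add: distrib_right sum.distrib)

lemma mmult_add_right: "h \<odot> (f + g) = h \<odot> f + h \<odot> g"
  unfolding mmult_def by (rule ext)+ (simp add: distrib_left sum.distrib)

lemma mmult_uminus_right: "h \<odot> (- f) = - (h \<odot> f)"
  unfolding mmult_def by (rule ext)+ (simp add: sum_negf)

lemma mmult_zero_left [simp]: "0 \<odot> h = 0"
  and mmult_zero_right [simp]: "h \<odot> 0 = 0"
  unfolding mmult_def by (auto intro!: ext)

lemma mmult_scale_left: "inc_scale c f \<odot> h = inc_scale c (f \<odot> h)"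
  unfolding mmult_def inc_scale_def by (rule ext)+ (simp add: sum_distrib_left mult.assoc)

lemma mmult_scale_right: "h \<odot> inc_scale c f = inc_scale c (h \<odot> f)"
  unfolding mmult_def inc_scale_def by (rule ext)+ (simp add: sum_distrib_left mult.left_commute)

lemma id_mat_mmult [simp]: "id_mat \<odot> f = f"
  and mmult_id_mat [simp]: "f \<odot> id_mat = f"
  unfolding mmult_def id_mat_def by (rule ext)+ simp_all

lemma unit_mat_mmult: "unit_mat x y \<odot> g = (\<lambda>a b. if a = x then g y b else 0)"
  unfolding mmult_def unit_mat_def by (rule ext)+ simp

lemma mmult_unit_mat: "g \<odot> unit_mat x y = (\<lambda>a b. if b = y then g a x else 0)"
  unfolding mmult_def unit_mat_def by (rule ext)+ simp

lemma unit_mat_mmult_unit_mat: "unit_mat x y \<odot> unit_mat z w = (if y = z then unit_mat x w else 0)"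
  unfolding unit_mat_mmult by (rule ext)+ (auto simp: unit_mat_def)

lemma unit_mat_sandwich: "unit_mat x x \<odot> g \<odot> unit_mat y y = inc_scale (g x y) (unit_mat x y)"
  unfolding unit_mat_mmult mmult_unit_mat by (rule ext)+ (simp add: unit_mat_def inc_scale_def)

lemma unit_mat_neq_0: "unit_mat x y \<noteq> (0::'a \<Rightarrow> 'a \<Rightarrow> 'b::field)"
  by (metis unit_mat_def zero_fun_def one_neq_zero)

lemma inc_scale_add: "inc_scale c (f + g) = inc_scale c f + inc_scale c g"
  unfolding inc_scale_def by (rule ext)+ (simp add: distrib_left)

lemma inc_scale_scale: "inc_scale c (inc_scale d f) = inc_scale (c * d) f"
  unfolding inc_scale_def by (rule ext)+ (simp add: mult.assoc)

lemma inc_scale_one [simp]: "inc_scale 1 f = f"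
  unfolding inc_scale_def by simp

lemma inc_scale_zero [simp]: "inc_scale 0 f = 0" "inc_scale c 0 = 0"
  unfolding inc_scale_def by (auto intro!: ext)

lemma inc_scale_eq_0_iff: "inc_scale c f = 0 \<longleftrightarrow> c = 0 \<or> f = 0"
  unfolding inc_scale_def by (auto simp: fun_eq_iff)

lemma inc_add_eq_plus: "inc_add f g = f + g"
  unfolding inc_add_def by (rule ext)+ simp

lemma inc_mult_eq_mmult: "f \<in> inc_alg \<Longrightarrow> g \<in> inc_alg \<Longrightarrow> inc_mult f g = f \<odot> g"
  unfolding inc_mult_def mmult_def inc_alg_def
  by (rule ext)+ (rule sum.mono_neutral_left, auto)

lemma inc_alg_mmult: "f \<in> inc_alg \<Longrightarrow> g \<in> inc_alg \<Longrightarrow> f \<odot> g \<in> inc_alg"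
  unfolding inc_alg_def mmult_def
  by clarsimp (rule sum.neutral, metis mult_not_zero order.trans)

lemma inc_alg_add: "f \<in> inc_alg \<Longrightarrow> g \<in> inc_alg \<Longrightarrow> f + g \<in> inc_alg"
  and inc_alg_scale: "f \<in> inc_alg \<Longrightarrow> inc_scale c f \<in> inc_alg"
  and inc_alg_zero: "0 \<in> inc_alg"
  and inc_alg_id_mat: "id_mat \<in> inc_alg"
  and inc_alg_unit_mat: "x \<le> y \<Longrightarrow> unit_mat x y \<in> inc_alg"
  unfolding inc_alg_def inc_scale_def id_mat_def unit_mat_def by auto

lemma inc_alg_sum: "(\<And>i. i \<in> I \<Longrightarrow> F i \<in> inc_alg) \<Longrightarrow> sum F I \<in> inc_alg"
  unfolding inc_alg_def by (simp add: sum_fun_apply sum.neutral)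

lemma inc_alg_unit_mat_expansion:
  fixes f :: "'a::{finite,order} \<Rightarrow> 'a \<Rightarrow> 'b::field"
  assumes "f \<in> inc_alg"
  shows "f = (\<Sum>p\<in>{p. fst p \<le> snd p}. inc_scale (f (fst p) (snd p)) (unit_mat (fst p) (snd p)))"
    (is "f = ?S")
proof (rule ext, rule ext)
  fix a b
  have "?S a b = (\<Sum>p\<in>{p. fst p \<le> snd p}. if p = (a, b) then f a b else 0)"
    unfolding sum_fun_apply inc_scale_def unit_mat_def by (rule sum.cong) auto
  also have "\<dots> = (if (a, b) \<in> {p. fst p \<le> snd p} then f a b else 0)"
    by (subst sum.delta) auto
  also have "\<dots> = f a b"
    using assms by (auto simp: inc_alg_def)
  finally show "f a b = ?S a b" by simp
qed

lemma inc_linearI: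
  assumes "\<And>f g. f \<in> inc_alg \<Longrightarrow> g \<in> inc_alg \<Longrightarrow> L (f + g) = L f + L g"
    and "\<And>c f. f \<in> inc_alg \<Longrightarrow> L (inc_scale c f) = inc_scale c (L f)"
  shows "inc_linear L"
  using assms unfolding inc_linear_def inc_add_eq_plus by blast

lemma inc_linear_add: "inc_linear L \<Longrightarrow> f \<in> inc_alg \<Longrightarrow> g \<in> inc_alg \<Longrightarrow> L (f + g) = L f + L g"
  and inc_linear_scale: "inc_linear L \<Longrightarrow> f \<in> inc_alg \<Longrightarrow> L (inc_scale c f) = inc_scale c (L f)"
  unfolding inc_linear_def inc_add_eq_plus by blast+

lemma inc_linear_zero: "inc_linear L \<Longrightarrow> L 0 = 0"
  using inc_linear_scale[of L 0 0] inc_alg_zero by simp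

lemma inc_linear_sum:
  assumes "inc_linear L" and "\<And>i. i \<in> I \<Longrightarrow> F i \<in> inc_alg"
  shows "L (sum F I) = (\<Sum>i\<in>I. L (F i))"
  using assms(2)
proof (induct I rule: infinite_finite_induct)
  case (insert i I)
  have "L (sum F (insert i I)) = L (F i + sum F I)"
    by (simp only: sum.insert[OF \<open>finite I\<close> \<open>i \<notin> I\<close>])
  also have "\<dots> = L (F i) + L (sum F I)"
    using insert.prems by (intro inc_linear_add[OF assms(1)] inc_alg_sum) auto
  also have "\<dots> = (\<Sum>i\<in>insert i I. L (F i))"
    using insert by simp
  finally show ?case .
qed (simp_all add: inc_linear_zero[OF assms(1)])

lemma inc_linear_unit_mat_expansion:
  fixes f :: "'a::{finite,order} \<Rightarrow> 'a \<Rightarrow> 'b::field"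
  assumes L: "inc_linear L" and f: "f \<in> inc_alg"
  shows "L f = (\<Sum>p\<in>{p. fst p \<le> snd p}. inc_scale (f (fst p) (snd p)) (L (unit_mat (fst p) (snd p))))"
proof -
  have "L f = (\<Sum>p\<in>{p. fst p \<le> snd p}. L (inc_scale (f (fst p) (snd p)) (unit_mat (fst p) (snd p))))"
    by (subst inc_alg_unit_mat_expansion[OF f], rule inc_linear_sum[OF L])
      (auto intro: inc_alg_scale inc_alg_unit_mat)
  then show ?thesis
    by (simp add: inc_linear_scale[OF L] inc_alg_unit_mat)
qed

lemma inc_linear_eq_on_unit_mats:
  fixes f :: "'a::{finite,order} \<Rightarrow> 'a \<Rightarrow> 'b::field"
  assumes L: "inc_linear L" and M: "inc_linear M"
    and units: "\<And>x y. x \<le> y \<Longrightarrow> L (unit_mat x y) = M (unit_mat x y)"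
    and f: "f \<in> inc_alg"
  shows "L f = M f"
  by (simp add: inc_linear_unit_mat_expansion[OF L f] inc_linear_unit_mat_expansion[OF M f] units)

lemma inc_linear_mmult_left:
  "inc_linear \<psi> \<Longrightarrow> h \<in> inc_alg \<Longrightarrow> inc_linear (\<lambda>f. \<psi> (h \<odot> f))"
  by (rule inc_linearI)
    (simp_all only: mmult_add_right mmult_scale_right inc_linear_add inc_linear_scale inc_alg_mmult)

lemma inc_linear_mmult_right:
  "inc_linear \<psi> \<Longrightarrow> h \<in> inc_alg \<Longrightarrow> inc_linear (\<lambda>f. \<psi> (f \<odot> h))"
  by (rule inc_linearI)
    (simp_all only: mmult_add_left mmult_scale_left inc_linear_add inc_linear_scale inc_alg_mmult)

lemma inc_linear_mmult_image_left: "inc_linear \<psi> \<Longrightarrow> inc_linear (\<lambda>f. h \<odot> \<psi> f)"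
  by (rule inc_linearI)
    (simp_all only: mmult_add_right mmult_scale_right inc_linear_add inc_linear_scale)

lemma inc_linear_mmult_image_right: "inc_linear \<psi> \<Longrightarrow> inc_linear (\<lambda>f. \<psi> f \<odot> h)"
  by (rule inc_linearI)
    (simp_all only: mmult_add_left mmult_scale_left inc_linear_add inc_linear_scale)

lemma multiplicative_if_on_unit_mats:
  fixes \<psi> :: "('a::{finite,order} \<Rightarrow> 'a \<Rightarrow> 'b::field) \<Rightarrow> ('a \<Rightarrow> 'a \<Rightarrow> 'b)"
  assumes lin: "inc_linear \<psi>"
    and units: "\<And>x y z w. x \<le> y \<Longrightarrow> z \<le> w \<Longrightarrow>
      \<psi> (unit_mat x y \<odot> unit_mat z w) = \<psi> (unit_mat x y) \<odot> \<psi> (unit_mat z w)"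
    and f: "f \<in> inc_alg" and g: "g \<in> inc_alg"
  shows "\<psi> (f \<odot> g) = \<psi> f \<odot> \<psi> g"
proof -
  have "\<psi> (f \<odot> unit_mat z w) = \<psi> f \<odot> \<psi> (unit_mat z w)" if "z \<le> w" for z w
    using inc_linear_eq_on_unit_mats[OF inc_linear_mmult_right[OF lin inc_alg_unit_mat[OF that]]
        inc_linear_mmult_image_right[OF lin] _ f] units that by blast
  then show ?thesis
    using inc_linear_eq_on_unit_mats[OF inc_linear_mmult_left[OF lin f]
        inc_linear_mmult_image_left[OF lin] _ g] by blast
qed

lemma anti_multiplicative_if_on_unit_mats:
  fixes \<psi> :: "('a::{finite,order} \<Rightarrow> 'a \<Rightarrow> 'b::field) \<Rightarrow> ('a \<Rightarrow> 'a \<Rightarrow> 'b)"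
  assumes lin: "inc_linear \<psi>"
    and units: "\<And>x y z w. x \<le> y \<Longrightarrow> z \<le> w \<Longrightarrow>
      \<psi> (unit_mat x y \<odot> unit_mat z w) = \<psi> (unit_mat z w) \<odot> \<psi> (unit_mat x y)"
    and f: "f \<in> inc_alg" and g: "g \<in> inc_alg"
  shows "\<psi> (f \<odot> g) = \<psi> g \<odot> \<psi> f"
proof -
  have "\<psi> (f \<odot> unit_mat z w) = \<psi> (unit_mat z w) \<odot> \<psi> f" if "z \<le> w" for z w
    using inc_linear_eq_on_unit_mats[OF inc_linear_mmult_right[OF lin inc_alg_unit_mat[OF that]]
        inc_linear_mmult_image_left[OF lin] _ f] units that by blast
  then show ?thesis
    using inc_linear_eq_on_unit_mats[OF inc_linear_mmult_left[OF lin f]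
        inc_linear_mmult_image_right[OF lin] _ g] by blast
qed

lemma central_eq_scalar:
  fixes u :: "'a::{finite,order} \<Rightarrow> 'a \<Rightarrow> 'b::field"
  assumes conn: "poset_connected TYPE('a)"
    and central: "\<And>x y. x \<le> y \<Longrightarrow> u \<odot> unit_mat x y = unit_mat x y \<odot> u"
  shows "\<exists>c. u = inc_scale c id_mat"
proof -
  have off_diag: "u x y = 0" if "x \<noteq> y" for x y
  proof -
    have "(u \<odot> unit_mat y y) x y = (unit_mat y y \<odot> u) x y"
      using central[of y y] by simp
    then show ?thesis using that by (simp add: unit_mat_mmult mmult_unit_mat)
  qed
  have diag_le: "u x x = u y y" if "x \<le> y" for x y
  proof -
    have "(u \<odot> unit_mat x y) x y = (unit_mat x y \<odot> u) x y"
      using central[OF that] by simp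
    then show ?thesis by (simp add: unit_mat_mmult mmult_unit_mat)
  qed
  have diag: "u z z = u a a" for z a
  proof -
    have "(\<lambda>a b. a \<le> b \<or> b \<le> a)\<^sup>*\<^sup>* a z"
      using conn unfolding poset_connected_def by blast
    then show ?thesis
      by (induction rule: rtranclp_induct) (auto simp: diag_le)
  qed
  have "u = inc_scale (u a a) id_mat" for a
  proof (rule ext, rule ext)
    fix x y
    show "u x y = inc_scale (u a a) id_mat x y"
      using diag[of x a] off_diag[of x y] by (cases "x = y") (simp_all add: inc_scale_def id_mat_def)
  qed
  then show ?thesis by blast
qed

lemma connected_strict_pairs_uniform:
  assumes conn: "poset_connected TYPE('a::order)"
    and adjacent: "\<And>x y z w :: 'a. x < y \<Longrightarrow> z < w \<Longrightarrow> x = z \<or> y = w \<or> y = z \<or> w = x \<Longrightarrow>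
      P x y \<Longrightarrow> P z w"
  shows "(\<forall>x y. x < y \<longrightarrow> P x y) \<or> (\<forall>x y. x < y \<longrightarrow> \<not> P x y)"
proof (cases "\<exists>x y::'a. x < y")
  case True
  then obtain x0 y0 :: 'a where "x0 < y0" by blast
  have adjacent_iff: "P x y \<longleftrightarrow> P z w"
    if "x < y" "z < w" "x = z \<or> y = w \<or> y = z \<or> w = x" for x y z w
    using adjacent[OF that] adjacent[of z w x y] that by blast
  have incident: "(\<forall>w. z < w \<longrightarrow> (P z w \<longleftrightarrow> P x0 y0)) \<and> (\<forall>w. w < z \<longrightarrow> (P w z \<longleftrightarrow> P x0 y0))"
    if "(\<lambda>a b. a \<le> b \<or> b \<le> a)\<^sup>*\<^sup>* x0 z" for z
    using that
  proof (induction rule: rtranclp_induct)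
    case base
    show ?case using adjacent_iff \<open>x0 < y0\<close> by blast
  next
    case (step z z')
    show ?case
    proof (cases "z = z'")
      case False
      with step.hyps(2) have "z < z' \<or> z' < z" by auto
      then show ?thesis
        using step.IH adjacent_iff[of z z'] adjacent_iff[of z' z] by blast
    qed (use step.IH in simp)
  qed
  have "P x y \<longleftrightarrow> P x0 y0" if "x < y" for x y
  proof -
    have "(\<lambda>a b. a \<le> b \<or> b \<le> a)\<^sup>*\<^sup>* x0 x"
      using conn unfolding poset_connected_def by blast
    then show ?thesis using incident that by blast
  qed
  then show ?thesis by (cases "P x0 y0") auto
qed simp

lemma idempotent_zero_diag_eq_0:
  fixes e :: "'a::{finite,order} \<Rightarrow> 'a \<Rightarrow> 'b::field"
  assumes e: "e \<in> inc_alg" and idem: "e \<odot> e = e" and diag: "\<And>z. e z z = 0"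
  shows "e = 0"
proof -
  have "e u v = 0" for u v
  proof (induction "card {t. u \<le> t \<and> t \<le> v}" arbitrary: u v rule: less_induct)
    case less
    have "e u v = (\<Sum>t\<in>UNIV. e u t * e t v)"
      using fun_cong[OF fun_cong[OF idem], of u v] by (simp add: mmult_def)
    also have "\<dots> = 0"
    proof (rule sum.neutral, intro ballI)
      fix t
      show "e u t * e t v = 0"
      proof (cases "u \<le> t \<and> t \<le> v \<and> t \<noteq> u \<and> t \<noteq> v")
        case True
        then have "{s. u \<le> s \<and> s \<le> t} \<subseteq> {s. u \<le> s \<and> s \<le> v}"
          and "v \<notin> {s. u \<le> s \<and> s \<le> t}" and "v \<in> {s. u \<le> s \<and> s \<le> v}"
          by (auto intro: order.trans dest: antisym)
        then have "{s. u \<le> s \<and> s \<le> t} \<subset> {s. u \<le> s \<and> s \<le> v}"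
          by blast
        then have "card {s. u \<le> s \<and> s \<le> t} < card {s. u \<le> s \<and> s \<le> v}"
          by (rule psubset_card_mono[rotated]) simp
        then show ?thesis using less.hyps by simp
      next
        case False
        then show ?thesis using e diag unfolding inc_alg_def by auto
      qed
    qed
    finally show ?case .
  qed
  then show ?thesis by (simp add: fun_eq_iff)
qed

lemma inc_alg_mmult_diag:
  fixes f :: "'a::{finite,order} \<Rightarrow> 'a \<Rightarrow> 'b::field"
  assumes "f \<in> inc_alg" "g \<in> inc_alg"
  shows "(f \<odot> g) z z = f z z * g z z"
proof -
  have "f z t * g t z = 0" if "t \<noteq> z" for t
    using assms that antisym[of z t] unfolding inc_alg_def by fastforce
  then show ?thesis
    unfolding mmult_def by (subst sum.remove[of _ z]) (simp_all add: sum.neutral)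
qed

lemma primitive_idempotent_through_unit_mat:
  fixes e :: "'a::{finite,order} \<Rightarrow> 'a \<Rightarrow> 'b::field"
  assumes e: "e \<in> inc_alg" and idem: "e \<odot> e = e" and nonzero: "e \<noteq> 0"
    and corner: "\<And>h. h \<in> inc_alg \<Longrightarrow> \<exists>c. e \<odot> h \<odot> e = inc_scale c e"
  obtains z where "e \<odot> unit_mat z z \<odot> e = e"
proof -
  obtain z where ez: "e z z \<noteq> 0"
    using idempotent_zero_diag_eq_0[OF e idem] nonzero by blast
  have "e z z * e z z = e z z"
    using inc_alg_mmult_diag[OF e e, of z] idem by simp
  with ez have ez1: "e z z = 1"
    by (metis mult.right_neutral mult_left_cancel)
  obtain c where c: "e \<odot> unit_mat z z \<odot> e = inc_scale c e"
    using corner[OF inc_alg_unit_mat[of z z]] by auto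
  have "(e \<odot> unit_mat z z \<odot> e) z z = e z z * e z z"
    unfolding mmult_unit_mat by (simp add: mmult_def)
  with c ez1 have "c = 1" by (simp add: inc_scale_def)
  with c show ?thesis using that by simp
qed

lemma primitive_idempotent_factor_eq_0:
  fixes e :: "'a::{finite,order} \<Rightarrow> 'a \<Rightarrow> 'b::field"
  assumes e: "e \<in> inc_alg" and idem: "e \<odot> e = e" and nonzero: "e \<noteq> 0"
    and corner: "\<And>h. h \<in> inc_alg \<Longrightarrow> \<exists>c. e \<odot> h \<odot> e = inc_scale c e"
    and right: "g \<odot> e = g" and left: "e \<odot> h = h" and prod: "g \<odot> h = 0"
  shows "g = 0 \<or> h = 0"
proof -
  obtain z where through_z: "e \<odot> unit_mat z z \<odot> e = e"
    using primitive_idempotent_through_unit_mat[OF e idem nonzero corner] by blast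
  have "g \<odot> unit_mat z z \<odot> h = (g \<odot> e) \<odot> unit_mat z z \<odot> (e \<odot> h)"
    by (simp only: right left)
  also have "\<dots> = g \<odot> (e \<odot> unit_mat z z \<odot> e) \<odot> h"
    by (simp only: mmult_assoc)
  also have "\<dots> = g \<odot> h"
    by (simp only: through_z right)
  finally have "g \<odot> unit_mat z z \<odot> h = 0"
    using prod by simp
  then have "(\<forall>u. g u z = 0) \<or> (\<forall>v. h z v = 0)"
    unfolding mmult_unit_mat by (simp add: mmult_def fun_eq_iff)
  then show ?thesis
  proof
    assume "\<forall>u. g u z = 0"
    then have "g \<odot> unit_mat z z = 0"
      by (simp add: mmult_unit_mat fun_eq_iff)
    then have "g \<odot> (e \<odot> unit_mat z z \<odot> e) = 0"
      by (simp only: mmult_assoc[symmetric] right mmult_zero_left)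
    then show ?thesis by (simp only: through_z right simp_thms)
  next
    assume "\<forall>v. h z v = 0"
    then have "unit_mat z z \<odot> h = 0"
      by (simp add: unit_mat_mmult fun_eq_iff)
    then have "e \<odot> unit_mat z z \<odot> e \<odot> h = 0"
      by (simp only: mmult_assoc left mmult_zero_right)
    then show ?thesis by (simp only: through_z left simp_thms)
  qed
qed

locale unital_jordan_triple_iso =
  fixes \<psi> :: "('a::{finite,order} \<Rightarrow> 'a \<Rightarrow> 'b::field) \<Rightarrow> ('a \<Rightarrow> 'a \<Rightarrow> 'b)"
  assumes bij: "bij_betw \<psi> inc_alg inc_alg"
    and linear: "inc_linear \<psi>"
    and triple: "\<And>f g. f \<in> inc_alg \<Longrightarrow> g \<in> inc_alg \<Longrightarrow> \<psi> (f \<odot> g \<odot> f) = \<psi> f \<odot> \<psi> g \<odot> \<psi> f"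
    and unital: "\<psi> id_mat = id_mat"
begin

abbreviation U :: "'a \<Rightarrow> 'a \<Rightarrow> 'a \<Rightarrow> 'a \<Rightarrow> 'b" where "U x y \<equiv> \<psi> (unit_mat x y)"
abbreviation E :: "'a \<Rightarrow> 'a \<Rightarrow> 'a \<Rightarrow> 'b" where "E x \<equiv> U x x"

lemma add: "f \<in> inc_alg \<Longrightarrow> g \<in> inc_alg \<Longrightarrow> \<psi> (f + g) = \<psi> f + \<psi> g"
  and scale: "f \<in> inc_alg \<Longrightarrow> \<psi> (inc_scale c f) = inc_scale c (\<psi> f)"
  and zero: "\<psi> 0 = 0"
  using inc_linear_add inc_linear_scale inc_linear_zero linear by blast+

lemma in_inc_alg: "f \<in> inc_alg \<Longrightarrow> \<psi> f \<in> inc_alg"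
  using bij bij_betwE by blast

lemma inj: "f \<in> inc_alg \<Longrightarrow> g \<in> inc_alg \<Longrightarrow> \<psi> f = \<psi> g \<Longrightarrow> f = g"
  using bij by (auto simp: bij_betw_def inj_on_def)

lemma eq_0_iff: "f \<in> inc_alg \<Longrightarrow> \<psi> f = 0 \<longleftrightarrow> f = 0"
  using inj[OF _ inc_alg_zero] zero by auto

lemma surj: "h \<in> inc_alg \<Longrightarrow> \<exists>g\<in>inc_alg. \<psi> g = h"
  using bij unfolding bij_betw_def by (metis imageE)

lemma square: "f \<in> inc_alg \<Longrightarrow> \<psi> (f \<odot> f) = \<psi> f \<odot> \<psi> f"
  using triple[of f id_mat] inc_alg_id_mat unital by simp

lemma jordan:
  assumes f: "f \<in> inc_alg" and g: "g \<in> inc_alg"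
  shows "\<psi> (f \<odot> g + g \<odot> f) = \<psi> f \<odot> \<psi> g + \<psi> g \<odot> \<psi> f"
proof -
  have fg: "f \<odot> f \<in> inc_alg" "g \<odot> g \<in> inc_alg" "f \<odot> g + g \<odot> f \<in> inc_alg"
    using f g by (auto intro: inc_alg_mmult inc_alg_add)
  have "(f + g) \<odot> (f + g) = f \<odot> f + (f \<odot> g + g \<odot> f) + g \<odot> g"
    by (simp only: mmult_add_left mmult_add_right add_ac)
  then have "\<psi> (f \<odot> f) + \<psi> (f \<odot> g + g \<odot> f) + \<psi> (g \<odot> g) = \<psi> ((f + g) \<odot> (f + g))"
    by (simp only: add fg inc_alg_add)
  also have "\<dots> = (\<psi> f + \<psi> g) \<odot> (\<psi> f + \<psi> g)"
    by (simp only: square inc_alg_add f g add)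
  also have "\<dots> = \<psi> (f \<odot> f) + (\<psi> f \<odot> \<psi> g + \<psi> g \<odot> \<psi> f) + \<psi> (g \<odot> g)"
    by (simp only: mmult_add_left mmult_add_right add_ac square f g)
  finally show ?thesis by simp
qed

lemma U_in_inc_alg: "x \<le> y \<Longrightarrow> U x y \<in> inc_alg"
  and U_neq_0: "x \<le> y \<Longrightarrow> U x y \<noteq> 0"
  by (simp_all add: in_inc_alg inc_alg_unit_mat eq_0_iff unit_mat_neq_0)

lemma jordan_unit_mat:
  "x \<le> y \<Longrightarrow> z \<le> w \<Longrightarrow>
    \<psi> (unit_mat x y \<odot> unit_mat z w + unit_mat z w \<odot> unit_mat x y) = U x y \<odot> U z w + U z w \<odot> U x y"
  by (rule jordan[OF inc_alg_unit_mat inc_alg_unit_mat])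

lemma E_idem: "E x \<odot> E x = E x"
  using square[OF inc_alg_unit_mat[of x x]] by (simp add: unit_mat_mmult_unit_mat)

lemma E_orth:
  assumes "x \<noteq> y"
  shows "E x \<odot> E y = 0"
proof -
  have sym: "E x \<odot> E y + E y \<odot> E x = 0"
    using jordan_unit_mat[of x x y y] assms by (simp add: unit_mat_mmult_unit_mat zero)
  have tri: "E x \<odot> (E y \<odot> E x) = 0"
    using triple[OF inc_alg_unit_mat inc_alg_unit_mat, of x x y y] assms
    by (simp add: unit_mat_mmult_unit_mat zero mmult_assoc)
  have anti: "E x \<odot> E y = - (E y \<odot> E x)"
    using sym by (simp add: eq_neg_iff_add_eq_0)
  have "E x \<odot> E y = E x \<odot> (E x \<odot> E y)"
    by (simp only: mmult_assoc[symmetric] E_idem)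
  also have "\<dots> = - (E x \<odot> (E y \<odot> E x))"
    by (simp only: anti mmult_uminus_right)
  finally show ?thesis
    by (simp only: tri minus_zero)
qed

lemma E_idem': "E x \<odot> (E x \<odot> h) = E x \<odot> h"
  and E_orth': "x \<noteq> y \<Longrightarrow> E x \<odot> (E y \<odot> h) = 0"
  by (simp_all add: mmult_assoc[symmetric] E_idem E_orth)

lemmas E_simps = mmult_assoc E_idem E_idem' E_orth E_orth'

lemma E_corner:
  assumes "h \<in> inc_alg"
  shows "\<exists>c. E x \<odot> h \<odot> E x = inc_scale c (E x)"
proof -
  obtain g where g: "g \<in> inc_alg" "\<psi> g = h"
    using surj[OF assms] by blast
  have "E x \<odot> h \<odot> E x = \<psi> (unit_mat x x \<odot> g \<odot> unit_mat x x)"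
    unfolding g(2)[symmetric] by (rule triple[OF inc_alg_unit_mat g(1), symmetric]) simp
  also have "\<dots> = inc_scale (g x x) (E x)"
    unfolding unit_mat_sandwich by (rule scale[OF inc_alg_unit_mat[OF order_refl]])
  finally show ?thesis by blast
qed

lemma mmult_eq_0_if_orth_E:
  assumes "g \<odot> E u = g" and "E v \<odot> h = h" and "u \<noteq> v"
  shows "g \<odot> h = 0"
proof -
  have "g \<odot> h = g \<odot> (E u \<odot> (E v \<odot> h))"
    by (simp only: assms(1,2) mmult_assoc[symmetric])
  also have "\<dots> = 0"
    by (simp only: E_orth'[OF assms(3)] mmult_zero_right)
  finally show ?thesis .
qed

lemma E_no_zero_divisors:
  "g \<odot> E z = g \<Longrightarrow> E z \<odot> h = h \<Longrightarrow> g \<odot> h = 0 \<Longrightarrow> g = 0 \<or> h = 0"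
  by (rule primitive_idempotent_factor_eq_0[OF U_in_inc_alg E_idem U_neq_0 E_corner]) auto

lemma peirce_decomposition:
  assumes "x < y"
  shows "U x y = E x \<odot> U x y \<odot> E y + E y \<odot> U x y \<odot> E x"
proof -
  have ne: "x \<noteq> y" "y \<noteq> x" using assms by auto
  have left: "E x \<odot> U x y + U x y \<odot> E x = U x y"
    using jordan_unit_mat[of x x x y] assms ne by (simp add: unit_mat_mmult_unit_mat)
  have right: "E y \<odot> U x y + U x y \<odot> E y = U x y"
    using jordan_unit_mat[of y y x y] assms ne by (simp add: unit_mat_mmult_unit_mat)
  have "E x \<odot> U x y = E x \<odot> (E y \<odot> U x y + U x y \<odot> E y)"
    using right by simp
  also have "\<dots> = E x \<odot> U x y \<odot> E y"
    using ne by (simp add: mmult_add_right E_simps)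
  finally have fwd: "E x \<odot> U x y = E x \<odot> U x y \<odot> E y" .
  have "U x y \<odot> E x = (E y \<odot> U x y + U x y \<odot> E y) \<odot> E x"
    using right by simp
  also have "\<dots> = E y \<odot> U x y \<odot> E x"
    using ne by (simp add: mmult_add_left E_simps)
  finally have bwd: "U x y \<odot> E x = E y \<odot> U x y \<odot> E x" .
  show ?thesis using left fwd bwd by simp
qed

lemma diag_eq_0_if_E_corner_eq_0:
  assumes "g \<in> inc_alg" and "E a \<odot> \<psi> g \<odot> E a = 0"
  shows "g a a = 0"
proof -
  have "\<psi> (inc_scale (g a a) (unit_mat a a)) = 0"
    using triple[OF inc_alg_unit_mat[of a a] assms(1)] assms(2) by (simp add: unit_mat_sandwich)
  then show ?thesis
    by (simp add: eq_0_iff inc_alg_scale inc_alg_unit_mat inc_scale_eq_0_iff unit_mat_neq_0)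
qed

definition fwd_part :: "'a \<Rightarrow> 'a \<Rightarrow> 'a \<Rightarrow> 'a \<Rightarrow> 'b" where
  "fwd_part x y = E x \<odot> U x y \<odot> E y"

definition rev_part :: "'a \<Rightarrow> 'a \<Rightarrow> 'a \<Rightarrow> 'a \<Rightarrow> 'b" where
  "rev_part x y = E y \<odot> U x y \<odot> E x"

text \<open>The preimage of fwd_part x y is supported on {x, y} with zero diagonal, hence a multiple
  of unit_mat x y; so fwd_part x y is a multiple of U x y, whose reversed part then vanishes.\<close>

lemma fwd_part_eq_0_or_rev_part_eq_0:
  assumes xy: "x < y"
  shows "fwd_part x y = 0 \<or> rev_part x y = 0"
proof -
  have ne: "x \<noteq> y" "y \<noteq> x" using xy by auto
  have "fwd_part x y \<in> inc_alg"
    unfolding fwd_part_def using xy by (intro inc_alg_mmult U_in_inc_alg) auto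
  then obtain g where g: "g \<in> inc_alg" "\<psi> g = fwd_part x y"
    using surj by blast
  have diag: "g x x = 0" "g y y = 0"
    using diag_eq_0_if_E_corner_eq_0[OF g(1)] g(2) ne by (simp_all add: fwd_part_def E_simps)
  have "g y x = 0" using g(1) xy unfolding inc_alg_def by auto
  define S :: "'a \<Rightarrow> 'a \<Rightarrow> 'b" where "S = unit_mat x x + unit_mat y y"
  have S: "S \<in> inc_alg" "\<psi> S = E x + E y"
    unfolding S_def by (simp_all add: inc_alg_add inc_alg_unit_mat add)
  have "\<psi> (S \<odot> g \<odot> S) = (E x + E y) \<odot> fwd_part x y \<odot> (E x + E y)"
    using triple[OF S(1) g(1)] g(2) S(2) by simp
  also have "\<dots> = \<psi> g"
    unfolding g(2) fwd_part_def using ne by (simp add: mmult_add_left mmult_add_right E_simps)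
  finally have "g = S \<odot> g \<odot> S"
    using inj[OF inc_alg_mmult[OF inc_alg_mmult[OF S(1) g(1)] S(1)] g(1)] by simp
  also have "\<dots> = inc_scale (g x y) (unit_mat x y)"
    unfolding S_def using diag \<open>g y x = 0\<close>
    by (simp add: mmult_add_left mmult_add_right unit_mat_sandwich)
  finally have "fwd_part x y = \<psi> (inc_scale (g x y) (unit_mat x y))"
    using g(2) by (metis arg_cong)
  then have "fwd_part x y = inc_scale (g x y) (U x y)"
    using scale[OF inc_alg_unit_mat] xy by simp
  moreover have "E y \<odot> fwd_part x y \<odot> E x = 0"
    unfolding fwd_part_def using ne by (simp add: E_simps)
  ultimately have "g x y = 0 \<or> rev_part x y = 0"
    unfolding rev_part_def by (simp add: mmult_scale_left mmult_scale_right inc_scale_eq_0_iff)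
  then show ?thesis
    using \<open>fwd_part x y = inc_scale (g x y) (U x y)\<close> by auto
qed

lemma absorb_if_rev_part_eq_0:
  assumes "x < y" "rev_part x y = 0"
  shows "E x \<odot> U x y = U x y" "U x y \<odot> E y = U x y"
proof -
  have eq: "U x y = E x \<odot> U x y \<odot> E y"
    using peirce_decomposition[OF assms(1)] assms(2) unfolding rev_part_def by simp
  show "E x \<odot> U x y = U x y" "U x y \<odot> E y = U x y"
    by (subst (1 2) eq, simp add: E_simps)+
qed

lemma absorb_if_rev_part_neq_0:
  assumes "x < y" "rev_part x y \<noteq> 0"
  shows "E y \<odot> U x y = U x y" "U x y \<odot> E x = U x y"
proof -
  have "fwd_part x y = 0"
    using fwd_part_eq_0_or_rev_part_eq_0[OF assms(1)] assms(2) by simp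
  then have eq: "U x y = E y \<odot> U x y \<odot> E x"
    using peirce_decomposition[OF assms(1)] unfolding fwd_part_def by simp
  show "E y \<odot> U x y = U x y" "U x y \<odot> E x = U x y"
    by (subst (1 2) eq, simp add: E_simps)+
qed

lemma rev_part_shared_source:
  assumes "x < y" "x < w"
  shows "rev_part x y = 0 \<longleftrightarrow> rev_part x w = 0"
proof -
  have False if xy: "x < y" and xw: "x < w" and fwd: "rev_part x y = 0" and rev: "rev_part x w \<noteq> 0"
    for y w
  proof -
    note a = absorb_if_rev_part_eq_0[OF xy fwd] and b = absorb_if_rev_part_neq_0[OF xw rev]
    have "y \<noteq> w" using fwd rev by auto
    have "U x y \<odot> U x w + U x w \<odot> U x y = 0"
      using jordan_unit_mat[OF less_imp_le[OF xy] less_imp_le[OF xw]]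
        dual_order.strict_implies_not_eq[OF xy] dual_order.strict_implies_not_eq[OF xw]
      by (simp add: unit_mat_mmult_unit_mat zero)
    moreover have "U x y \<odot> U x w = 0"
      by (rule mmult_eq_0_if_orth_E[OF a(2) b(1) \<open>y \<noteq> w\<close>])
    ultimately have "U x w \<odot> U x y = 0" by simp
    then show False
      using E_no_zero_divisors[OF b(2) a(1)] U_neq_0 xy xw by auto
  qed
  then show ?thesis using assms by blast
qed

lemma rev_part_shared_target:
  assumes "x < y" "z < y"
  shows "rev_part x y = 0 \<longleftrightarrow> rev_part z y = 0"
proof -
  have False if xy: "x < y" and zy: "z < y" and fwd: "rev_part x y = 0" and rev: "rev_part z y \<noteq> 0"
    for x z
  proof -
    note a = absorb_if_rev_part_eq_0[OF xy fwd] and b = absorb_if_rev_part_neq_0[OF zy rev]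
    have "z \<noteq> x" using fwd rev by auto
    have "U x y \<odot> U z y + U z y \<odot> U x y = 0"
      using jordan_unit_mat[OF less_imp_le[OF xy] less_imp_le[OF zy]]
        less_imp_neq[OF xy] less_imp_neq[OF zy]
      by (simp add: unit_mat_mmult_unit_mat zero)
    moreover have "U z y \<odot> U x y = 0"
      by (rule mmult_eq_0_if_orth_E[OF b(2) a(1) \<open>z \<noteq> x\<close>])
    ultimately have "U x y \<odot> U z y = 0" by simp
    then show False
      using E_no_zero_divisors[OF a(2) b(1)] U_neq_0 xy zy by auto
  qed
  then show ?thesis using assms by blast
qed

lemma rev_part_chain:
  assumes xy: "x < y" and yw: "y < w"
  shows "rev_part x y = 0 \<longleftrightarrow> rev_part y w = 0"
proof -
  have ne: "x \<noteq> y" "y \<noteq> w" "w \<noteq> x" using xy yw by auto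
  have sum: "U x y \<odot> U y w + U y w \<odot> U x y = U x w"
    using jordan_unit_mat[OF less_imp_le[OF xy] less_imp_le[OF yw]] ne
    by (simp add: unit_mat_mmult_unit_mat)
  have "U x w \<noteq> 0" using U_neq_0 xy yw by simp
  show ?thesis
  proof (intro iffI; rule ccontr)
    assume fwd: "rev_part x y = 0" and rev: "rev_part y w \<noteq> 0"
    note a = absorb_if_rev_part_eq_0[OF xy fwd] and b = absorb_if_rev_part_neq_0[OF yw rev]
    have "U x y \<odot> U y w = 0" by (rule mmult_eq_0_if_orth_E[OF a(2) b(1) ne(2)])
    moreover have "U y w \<odot> U x y = 0" by (rule mmult_eq_0_if_orth_E[OF b(2) a(1)]) (use ne in auto)
    ultimately show False using sum \<open>U x w \<noteq> 0\<close> by simp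
  next
    assume fwd: "rev_part y w = 0" and rev: "rev_part x y \<noteq> 0"
    note a = absorb_if_rev_part_neq_0[OF xy rev] and b = absorb_if_rev_part_eq_0[OF yw fwd]
    have "U x y \<odot> U y w = 0" by (rule mmult_eq_0_if_orth_E[OF a(2) b(1)]) (use ne in auto)
    moreover have "U y w \<odot> U x y = 0" by (rule mmult_eq_0_if_orth_E[OF b(2) a(1)]) (use ne in auto)
    ultimately show False using sum \<open>U x w \<noteq> 0\<close> by simp
  qed
qed

lemma rev_part_uniform:
  assumes "poset_connected TYPE('a)"
  shows "(\<forall>x y. x < y \<longrightarrow> rev_part x y = 0) \<or> (\<forall>x y. x < y \<longrightarrow> \<not> rev_part x y = 0)"
proof (rule connected_strict_pairs_uniform[OF assms])
  fix x y z w :: 'a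
  assume "x < y" "z < w" "x = z \<or> y = w \<or> y = z \<or> w = x" "rev_part x y = 0"
  then show "rev_part z w = 0"
    using rev_part_shared_source rev_part_shared_target rev_part_chain by metis
qed

lemma unit_mat_mult_if_rev_parts_vanish:
  assumes vanish: "\<And>a b. a < b \<Longrightarrow> rev_part a b = 0" and xy: "x \<le> y" and zw: "z \<le> w"
  shows "\<psi> (unit_mat x y \<odot> unit_mat z w) = U x y \<odot> U z w"
proof -
  have absorb: "E a \<odot> U a b = U a b" "U a b \<odot> E b = U a b" if "a \<le> b" for a b
    using absorb_if_rev_part_eq_0[OF _ vanish] E_idem that
    by (cases "a = b"; simp add: order.order_iff_strict)+
  consider (apart) "y \<noteq> z" | (left_id) "y = z" "x = y" | (right_id) "y = z" "z = w"
    | (chain) "y = z" "x \<noteq> y" "z \<noteq> w" by blast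
  then show ?thesis
  proof cases
    case apart
    then show ?thesis
      using mmult_eq_0_if_orth_E[OF absorb(2)[OF xy] absorb(1)[OF zw]]
      by (simp add: unit_mat_mmult_unit_mat zero)
  next
    case left_id
    then show ?thesis using absorb(1)[OF zw] by (simp add: unit_mat_mmult_unit_mat)
  next
    case right_id
    then show ?thesis using absorb(2)[OF xy] by (simp add: unit_mat_mmult_unit_mat)
  next
    case chain
    then have "x \<noteq> w" using xy zw by auto
    then have "U z w \<odot> U x y = 0"
      using mmult_eq_0_if_orth_E[OF absorb(2)[OF zw] absorb(1)[OF xy]] by simp
    then show ?thesis
      using jordan_unit_mat[OF xy zw] chain \<open>x \<noteq> w\<close> by (simp add: unit_mat_mmult_unit_mat)
  qed
qed

lemma unit_mat_anti_mult_if_rev_parts_nonzero: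
  assumes nonzero: "\<And>a b. a < b \<Longrightarrow> rev_part a b \<noteq> 0" and xy: "x \<le> y" and zw: "z \<le> w"
  shows "\<psi> (unit_mat x y \<odot> unit_mat z w) = U z w \<odot> U x y"
proof -
  have absorb: "E b \<odot> U a b = U a b" "U a b \<odot> E a = U a b" if "a \<le> b" for a b
    using absorb_if_rev_part_neq_0[OF _ nonzero] E_idem that
    by (cases "a = b"; simp add: order.order_iff_strict)+
  consider (apart) "y \<noteq> z" | (left_id) "y = z" "x = y" | (right_id) "y = z" "z = w"
    | (chain) "y = z" "x \<noteq> y" "z \<noteq> w" by blast
  then show ?thesis
  proof cases
    case apart
    then show ?thesis
      using mmult_eq_0_if_orth_E[OF absorb(2)[OF zw] absorb(1)[OF xy]]
      by (simp add: unit_mat_mmult_unit_mat zero)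
  next
    case left_id
    then show ?thesis using absorb(2)[OF zw] by (simp add: unit_mat_mmult_unit_mat)
  next
    case right_id
    then show ?thesis using absorb(1)[OF xy] by (simp add: unit_mat_mmult_unit_mat)
  next
    case chain
    then have "x \<noteq> w" using xy zw by auto
    then have "U x y \<odot> U z w = 0"
      using mmult_eq_0_if_orth_E[OF absorb(2)[OF xy] absorb(1)[OF zw]] chain by simp
    then show ?thesis
      using jordan_unit_mat[OF xy zw] chain \<open>x \<noteq> w\<close> by (simp add: unit_mat_mmult_unit_mat)
  qed
qed

theorem automorphism_or_anti_automorphism:
  assumes "poset_connected TYPE('a)"
  shows "inc_automorphism \<psi> \<or> inc_anti_automorphism \<psi>"
  using rev_part_uniform[OF assms]
proof
  assume "\<forall>x y. x < y \<longrightarrow> rev_part x y = 0"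
  then have "\<psi> (f \<odot> g) = \<psi> f \<odot> \<psi> g" if "f \<in> inc_alg" "g \<in> inc_alg" for f g
    using multiplicative_if_on_unit_mats[OF linear unit_mat_mult_if_rev_parts_vanish that] by blast
  then show ?thesis
    unfolding inc_automorphism_def using bij linear by (simp add: inc_mult_eq_mmult in_inc_alg)
next
  assume "\<forall>x y. x < y \<longrightarrow> \<not> rev_part x y = 0"
  then have "\<psi> (f \<odot> g) = \<psi> g \<odot> \<psi> f" if "f \<in> inc_alg" "g \<in> inc_alg" for f g
    using anti_multiplicative_if_on_unit_mats[OF linear unit_mat_anti_mult_if_rev_parts_nonzero that]
    by blast
  then show ?thesis
    unfolding inc_anti_automorphism_def using bij linear by (simp add: inc_mult_eq_mmult in_inc_alg)
qed

end

lemma jordan_triple_iso_id_mat_eq_scalar: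
  fixes \<phi> :: "('a::{finite,order} \<Rightarrow> 'a \<Rightarrow> 'b::field) \<Rightarrow> ('a \<Rightarrow> 'a \<Rightarrow> 'b)"
  assumes conn: "poset_connected TYPE('a)" and bij: "bij_betw \<phi> inc_alg inc_alg"
    and triple: "\<And>f g. f \<in> inc_alg \<Longrightarrow> g \<in> inc_alg \<Longrightarrow> \<phi> (f \<odot> g \<odot> f) = \<phi> f \<odot> \<phi> g \<odot> \<phi> f"
  shows "\<exists>c. c * c = 1 \<and> \<phi> id_mat = inc_scale c id_mat"
proof -
  define u where "u = \<phi> id_mat"
  have sandwich: "u \<odot> h \<odot> u = h" if "h \<in> inc_alg" for h
  proof -
    have "h \<in> \<phi> ` inc_alg"
      using bij that by (simp add: bij_betw_def)
    then obtain g where g: "g \<in> inc_alg" "\<phi> g = h"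
      by (rule imageE) simp
    have "\<phi> g = \<phi> id_mat \<odot> \<phi> g \<odot> \<phi> id_mat"
      using triple[OF inc_alg_id_mat g(1)] by (simp only: id_mat_mmult mmult_id_mat)
    then show ?thesis
      unfolding u_def g(2) by (rule sym)
  qed
  have square: "u \<odot> u = id_mat"
    using sandwich[OF inc_alg_id_mat] by simp
  have "u \<odot> h = h \<odot> u" if "h \<in> inc_alg" for h
  proof -
    have "u \<odot> h = (u \<odot> u) \<odot> h \<odot> u"
      by (subst (1) sandwich[OF that, symmetric]) (simp only: mmult_assoc)
    then show ?thesis by (simp add: square)
  qed
  then obtain c where c: "u = inc_scale c id_mat"
    using central_eq_scalar[OF conn] inc_alg_unit_mat by blast
  have "inc_scale (c * c) id_mat = (id_mat :: 'a \<Rightarrow> 'a \<Rightarrow> 'b)"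
    using square unfolding c by (simp add: mmult_scale_left mmult_scale_right inc_scale_scale)
  then have "inc_scale (c * c) id_mat a a = (id_mat a a :: 'b)" for a :: 'a
    by (simp only:)
  then have "c * c = 1"
    by (simp add: inc_scale_def id_mat_def)
  then show ?thesis
    using c unfolding u_def by blast
qed

lemma unital_jordan_triple_iso_scaled:
  fixes \<phi> :: "('a::{finite,order} \<Rightarrow> 'a \<Rightarrow> 'b::field) \<Rightarrow> ('a \<Rightarrow> 'a \<Rightarrow> 'b)"
  assumes bij: "bij_betw \<phi> inc_alg inc_alg" and lin: "inc_linear \<phi>"
    and triple: "\<And>f g. f \<in> inc_alg \<Longrightarrow> g \<in> inc_alg \<Longrightarrow> \<phi> (f \<odot> g \<odot> f) = \<phi> f \<odot> \<phi> g \<odot> \<phi> f"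
    and c: "c * c = 1" and unit: "\<phi> id_mat = inc_scale c id_mat"
  shows "unital_jordan_triple_iso (\<lambda>f. inc_scale c (\<phi> f))"
proof
  have involution: "inc_scale c (inc_scale c f) = f" for f :: "'a \<Rightarrow> 'a \<Rightarrow> 'b"
    by (simp add: inc_scale_scale c)
  have "bij_betw (inc_scale c) inc_alg (inc_alg :: ('a \<Rightarrow> 'a \<Rightarrow> 'b) set)"
    by (rule bij_betw_byWitness[where f' = "inc_scale c"]) (auto simp: involution inc_alg_scale)
  then show "bij_betw (\<lambda>f. inc_scale c (\<phi> f)) inc_alg inc_alg"
    using bij_betw_trans[OF bij] by (simp add: comp_def)
  show "inc_linear (\<lambda>f. inc_scale c (\<phi> f))"
    by (rule inc_linearI)
      (simp_all add: inc_linear_add[OF lin] inc_linear_scale[OF lin] inc_scale_add inc_scale_scale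
        mult.commute)
  show "inc_scale c (\<phi> id_mat) = id_mat"
    by (simp add: unit involution)
  fix f g :: "'a \<Rightarrow> 'a \<Rightarrow> 'b"
  assume "f \<in> inc_alg" "g \<in> inc_alg"
  then have "inc_scale c (\<phi> (f \<odot> g \<odot> f)) = inc_scale (c * c * c) (\<phi> f \<odot> \<phi> g \<odot> \<phi> f)"
    by (simp add: triple c)
  also have "\<dots> = inc_scale c (\<phi> f) \<odot> inc_scale c (\<phi> g) \<odot> inc_scale c (\<phi> f)"
    by (simp only: mmult_scale_left mmult_scale_right inc_scale_scale mult.assoc)
  finally show "inc_scale c (\<phi> (f \<odot> g \<odot> f)) = inc_scale c (\<phi> f) \<odot> inc_scale c (\<phi> g) \<odot> inc_scale c (\<phi> f)" .
qed

theorem proposition6p5: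
  fixes \<phi> :: "('a::{finite,order} \<Rightarrow> 'a \<Rightarrow> 'b::field) \<Rightarrow> ('a \<Rightarrow> 'a \<Rightarrow> 'b)"
  assumes conn: "poset_connected TYPE('a)"
    and char2: "(2::'b) \<noteq> 0" and char3: "(3::'b) \<noteq> 0"
    and bij: "bij_betw \<phi> inc_alg inc_alg"
    and lin: "inc_linear \<phi>"
    and jordan: "\<forall>f\<in>inc_alg. \<forall>g\<in>inc_alg.
                   \<phi> (inc_mult (inc_mult f g) f) = inc_mult (inc_mult (\<phi> f) (\<phi> g)) (\<phi> f)"
  shows "\<exists>r::'b. (r = -1 \<or> r = 1) \<and>
           (\<exists>\<psi>. (inc_automorphism \<psi> \<or> inc_anti_automorphism \<psi>) \<and>
                 (\<forall>f\<in>inc_alg. \<phi> f = inc_scale r (\<psi> f)))"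
proof -
  have triple: "\<phi> (f \<odot> g \<odot> f) = \<phi> f \<odot> \<phi> g \<odot> \<phi> f" if "f \<in> inc_alg" "g \<in> inc_alg" for f g
    using jordan that bij_betwE[OF bij] by (simp add: inc_mult_eq_mmult inc_alg_mmult)
  obtain c where c: "c * c = 1" "\<phi> id_mat = inc_scale c id_mat"
    using jordan_triple_iso_id_mat_eq_scalar[OF conn bij triple] by blast
  interpret \<psi>: unital_jordan_triple_iso "\<lambda>f. inc_scale c (\<phi> f)"
    by (rule unital_jordan_triple_iso_scaled[OF bij lin triple c])
  have "\<phi> f = inc_scale c (inc_scale c (\<phi> f))" for f
    by (simp add: inc_scale_scale c(1))
  moreover have "c = -1 \<or> c = 1"
    using c(1) square_eq_1_iff[of c] by (auto simp: power2_eq_square)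
  ultimately show ?thesis
    using \<psi>.automorphism_or_anti_automorphism[OF conn] by blast
qed

end
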